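(* Let $X$ be a finite alphabet, $\#$ a symbol not in $X$, $X^\# = X \cup \{\#\}$, and let $w \in \overline{X}^*$. Then the following are equivalent: (i) $w$ represents $1$ in the polycyclic monoid $P(X)$; (ii) $w$ admits a permissible padding which represents $1$ in the polycyclic monoid $P(X^\#)$; (iii) $w$ admits a permissible padding which represents $1$ in the free group $F(X^\#)$.
   Context: For an alphabet $Y$, $\overline{Y} = \{y, y^{-1} : y \in Y\}$; letters of $Y$ are positive generators and letters $y^{-1}$ negative generators. The polycyclic monoid $P(Y)$ is the monoid of partial functions on $Y^*$ (composed left to right: $fg$ means apply $f$ then $g$) generated by $y: z \mapsto zy$ (defined everywhere) and $y^{-1}: zy \mapsto z$ (defined on $Y^*y$), $y \in Y$. $F(Y)$ is the free group with presentation $\langle \overline{Y} \mid yy^{-1} = y^{-1}y = 1 \ (y \in Y)\rangle$. Permissible padding: for $w = w_1 \cdots w_n$ with $w_i \in \overline{X}$, a permissible padding of $w$ is a word $x_1 x_2 \cdots x_n (\#^{-1})^k$ over $\overline{X^\#}$ with $k \geq 0$, where $x_i = (\#^{-1})^{m_i} w_i \#$ for some $m_i \geq 0$ if $w_i$ is a negative generator, and $x_i = w_i \#$ if $w_i$ is a positive generator. *)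

theory Defs
  imports Main
begin

text \<open>A letter of overline(Y) is a pair (y, b): b = True means the positive generator y,
  b = False means the negative generator y^-1.\<close>
type_synonym 'a gen = "'a \<times> bool"

definition ginv :: "'a gen \<Rightarrow> 'a gen" where
  "ginv g = (fst g, \<not> snd g)"

fun gen_act :: "'a gen \<Rightarrow> 'a list \<Rightarrow> 'a list option" where
  "gen_act (y, True) z = Some (z @ [y])"
| "gen_act (y, False) z =
     (if z \<noteq> [] \<and> last z = y then Some (butlast z) else None)"

fun word_act :: "'a gen list \<Rightarrow> 'a list \<Rightarrow> 'a list option" where
  "word_act [] z = Some z"
| "word_act (g # w) z = Option.bind (gen_act g z) (word_act w)"

definition rep_one_poly :: "'a set \<Rightarrow> 'a gen list \<Rightarrow> bool" where
  "rep_one_poly Y w \<longleftrightarrow> (\<forall>z \<in> lists Y. word_act w z = Some z)"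

inductive free_step :: "'a gen list \<Rightarrow> 'a gen list \<Rightarrow> bool" where
  "free_step (u @ [g, ginv g] @ v) (u @ v)"

definition free_eq :: "'a gen list \<Rightarrow> 'a gen list \<Rightarrow> bool" where
  "free_eq u v \<longleftrightarrow> (u, v) \<in> (({(x, y). free_step x y} \<union> {(x, y). free_step y x})\<^sup>*)"

definition rep_one_free :: "'a gen list \<Rightarrow> bool" where
  "rep_one_free w \<longleftrightarrow> free_eq w []"

definition pad_letter :: "'a \<Rightarrow> 'a gen \<Rightarrow> nat \<Rightarrow> 'a gen list" where
  "pad_letter h g m =
     (if snd g then [g, (h, True)] else replicate m (h, False) @ [g, (h, True)])"

definition permissible_padding :: "'a \<Rightarrow> 'a gen list \<Rightarrow> 'a gen list \<Rightarrow> bool" where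
  "permissible_padding h w p \<longleftrightarrow>
     (\<exists>ms k. length ms = length w \<and>
        p = concat (map (\<lambda>(g, m). pad_letter h g m) (zip w ms)) @ replicate k (h, False))"

end

theory Submission
  imports Defs
begin

text \<open>(i) \<open>\<Longrightarrow>\<close> (ii): run \<open>w\<close> on \<open>X\<^sup>*\<close> and mirror the run in \<open>P(X\<^sup>#)\<close>, where every letter
  also pushes a \<open>#\<close> and a letter \<open>y\<^sup>-\<^sup>1\<close> is preceded by exactly as many \<open>#\<^sup>-\<^sup>1\<close> as there are
  \<open>#\<close>s on top of the stack; the stack of \<open>P(X\<^sup>#)\<close> is then that of \<open>P(X)\<close> with \<open>#\<close>s inserted,
  and the final \<open>#\<^sup>-\<^sup>k\<close> clears it. (ii) \<open>\<Longrightarrow>\<close> (iii): a cancellation \<open>y y\<^sup>-\<^sup>1\<close> in a polycyclic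
  monoid is also one in the free group.
  (iii) \<open>\<Longrightarrow>\<close> (i): freely reduce the padding from left to right. At every block boundary the
  reduced prefix is empty or ends with \<open>#\<close>, so a positive letter of \<open>X\<close> is never cancelled
  against a negative one, and a negative letter of \<open>X\<close>, once present in the reduced prefix,
  stays there. Since the padding reduces to \<open>1\<close>, no such letter ever occurs, and then the
  letters of \<open>X\<close> in the reduced prefixes are exactly the successive states of \<open>w\<close> in \<open>P(X)\<close>.\<close>

lemma word_act_append:
  "word_act (u @ v) z = Option.bind (word_act u z) (word_act v)"
  by (induction u arbitrary: z) (auto split: Option.bind_split)

lemma word_act_append_left:
  "word_act w z = Some z' \<Longrightarrow> word_act w (a @ z) = Some (a @ z')"
proof (induction w arbitrary: z)
  case (Cons g w)
  obtain y b where g: "g = (y, b)" by fastforce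
  show ?case
  proof (cases b)
    case False
    with Cons.prems g have "z \<noteq> []" "last z = y" "word_act w (butlast z) = Some z'"
      by (auto split: if_splits)
    with Cons.IH g False show ?thesis by (simp add: butlast_append)
  qed (use Cons g in simp)
qed simp

lemma rep_one_poly_iff: "rep_one_poly Y w \<longleftrightarrow> word_act w [] = Some []"
  unfolding rep_one_poly_def using word_act_append_left[of w "[]" "[]"] by force

definition padded :: "'a \<Rightarrow> 'a gen list \<Rightarrow> nat list \<Rightarrow> 'a gen list" where
  "padded h w ms = concat (map (\<lambda>(g, m). pad_letter h g m) (zip w ms))"

lemma padded_Nil [simp]: "padded h [] ms = []"
  by (simp add: padded_def)

lemma padded_Cons [simp]: "padded h (g # w) (m # ms) = pad_letter h g m @ padded h w ms"
  by (simp add: padded_def)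

lemma permissible_padding_iff:
  "permissible_padding h w p \<longleftrightarrow>
     (\<exists>ms k. length ms = length w \<and> p = padded h w ms @ replicate k (h, False))"
  by (simp add: permissible_padding_def padded_def)

lemma word_act_pop_replicate:
  "word_act (replicate m (h, False)) (Q @ replicate m h) = Some Q"
proof (induction m)
  case (Suc m)
  have "Q @ replicate (Suc m) h = (Q @ replicate m h) @ [h]"
    by (simp add: replicate_append_same)
  moreover have "gen_act (h, False) ((Q @ replicate m h) @ [h]) = Some (Q @ replicate m h)"
    by (simp add: butlast_append)
  ultimately show ?case using Suc by simp
qed simp

lemma ex_trailing_replicate: "\<exists>Q m. xs = Q @ replicate m a \<and> (Q = [] \<or> last Q \<noteq> a)"
proof (induction xs rule: rev_induct)
  case (snoc x xs)
  show ?case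
  proof (cases "x = a")
    case True
    from snoc obtain Q m where "xs = Q @ replicate m a" "Q = [] \<or> last Q \<noteq> a" by blast
    with True show ?thesis
      by (intro exI[of _ Q] exI[of _ "Suc m"]) (simp add: replicate_append_same)
  qed (intro exI[of _ "xs @ [x]"] exI[of _ 0], simp)
qed simp

lemma pad_letter_simulates:
  assumes "fst g \<noteq> h" "gen_act g (filter (\<lambda>c. c \<noteq> h) P) = Some s'"
  shows "\<exists>m P'. word_act (pad_letter h g m) P = Some P' \<and> filter (\<lambda>c. c \<noteq> h) P' = s'"
proof -
  obtain y b where g: "g = (y, b)" by fastforce
  show ?thesis
  proof (cases b)
    case True
    with assms g show ?thesis
      by (intro exI[of _ 0] exI[of _ "P @ [y, h]"]) (simp add: pad_letter_def)
  next
    case False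
    obtain Q m where P: "P = Q @ replicate m h" and Q: "Q = [] \<or> last Q \<noteq> h"
      using ex_trailing_replicate[of P h] by blast
    have "filter (\<lambda>c. c \<noteq> h) P = filter (\<lambda>c. c \<noteq> h) Q"
      using P by simp
    with assms(2) g False have "filter (\<lambda>c. c \<noteq> h) Q \<noteq> []"
      and last: "last (filter (\<lambda>c. c \<noteq> h) Q) = y"
      and s': "s' = butlast (filter (\<lambda>c. c \<noteq> h) Q)"
      by (simp_all split: if_splits)
    then obtain Q0 q where Q0: "Q = Q0 @ [q]"
      by (cases Q rule: rev_cases) auto
    with Q have "q \<noteq> h" by simp
    with Q0 last s' have "q = y" "s' = filter (\<lambda>c. c \<noteq> h) (Q0 @ [h])"
      by simp_all
    moreover have "word_act (pad_letter h g m) P = Some (Q0 @ [h])"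
      using g False P Q0 \<open>q = y\<close> word_act_pop_replicate[of m h "Q0 @ [y]"]
      by (simp add: pad_letter_def word_act_append)
    ultimately show ?thesis by (intro exI[of _ m] exI[of _ "Q0 @ [h]"]) simp
  qed
qed

lemma padded_simulates:
  assumes "\<forall>g\<in>set w. fst g \<noteq> h" "word_act w (filter (\<lambda>c. c \<noteq> h) P) = Some t"
  shows "\<exists>ms P'. length ms = length w \<and> word_act (padded h w ms) P = Some P'
                 \<and> filter (\<lambda>c. c \<noteq> h) P' = t"
  using assms
proof (induction w arbitrary: P)
  case (Cons g w)
  obtain s' where s': "gen_act g (filter (\<lambda>c. c \<noteq> h) P) = Some s'"
    and t: "word_act w s' = Some t"
    using Cons.prems(2) by (cases "gen_act g (filter (\<lambda>c. c \<noteq> h) P)") auto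
  obtain m P1 where m: "word_act (pad_letter h g m) P = Some P1"
    and P1: "filter (\<lambda>c. c \<noteq> h) P1 = s'"
    using pad_letter_simulates[OF _ s'] Cons.prems(1) by auto
  obtain ms P' where "length ms = length w" "word_act (padded h w ms) P1 = Some P'"
    "filter (\<lambda>c. c \<noteq> h) P' = t"
    using Cons.IH[of P1] Cons.prems(1) P1 t by auto
  with m show ?case
    by (intro exI[of _ "m # ms"] exI[of _ P']) (simp add: word_act_append)
qed simp

lemma padding_of_rep_one_poly:
  assumes "\<forall>g\<in>set w. fst g \<noteq> h" "word_act w [] = Some []"
  shows "\<exists>p. permissible_padding h w p \<and> word_act p [] = Some []"
proof -
  obtain ms P where ms: "length ms = length w" and act: "word_act (padded h w ms) [] = Some P"
    and "filter (\<lambda>c. c \<noteq> h) P = []"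
    using padded_simulates[of w h "[]"] assms by auto
  then have "P = [] @ replicate (length P) h"
    by (simp add: filter_empty_conv replicate_length_same)
  then have "word_act (replicate (length P) (h, False)) P = Some []"
    by (metis word_act_pop_replicate)
  with ms act show ?thesis
    unfolding permissible_padding_iff
    by (intro exI[of _ "padded h w ms @ replicate (length P) (h, False)"]) (auto simp: word_act_append)
qed

lemma word_act_free_eq:
  "word_act p s = Some t \<Longrightarrow> free_eq (map (\<lambda>y. (y, True)) s @ p) (map (\<lambda>y. (y, True)) t)"
proof (induction p arbitrary: s)
  case Nil
  then show ?case by (simp add: free_eq_def)
next
  case (Cons g p)
  obtain y b where g: "g = (y, b)" by fastforce
  show ?case
  proof (cases b)
    case True
    with Cons.prems g show ?thesis using Cons.IH[of "s @ [y]"] by simp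
  next
    case False
    with Cons.prems g obtain s0 where s: "s = s0 @ [y]" and act: "word_act p s0 = Some t"
      by (auto split: if_splits intro: append_butlast_last_id[symmetric])
    have "free_step (map (\<lambda>y. (y, True)) s0 @ [(y, True), ginv (y, True)] @ p)
                    (map (\<lambda>y. (y, True)) s0 @ p)"
      by (rule free_step.intros)
    with Cons.IH[OF act] s g False show ?thesis
      unfolding free_eq_def by (auto simp: ginv_def intro: converse_rtrancl_into_rtrancl)
  qed
qed

text \<open>Free reduction with a stack: a freely reduced word is stored reversed, so that its last
  letter is the head of the list.\<close>
fun red_step :: "'a gen list \<Rightarrow> 'a gen \<Rightarrow> 'a gen list" where
  "red_step [] g = [g]"
| "red_step (c # S) g = (if c = ginv g then S else g # c # S)"

definition red :: "'a gen list \<Rightarrow> 'a gen list" where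
  "red w = foldl red_step [] w"

lemma ginv_ginv [simp]: "ginv (ginv g) = g"
  by (simp add: ginv_def)

lemma successively_red_step:
  assumes "successively (\<lambda>a b. a \<noteq> ginv b) S"
  shows "successively (\<lambda>a b. a \<noteq> ginv b) (red_step S g)"
proof (cases S)
  case (Cons c T)
  show ?thesis
  proof (cases "c = ginv g")
    case False
    then have "g \<noteq> ginv c" by (metis ginv_ginv)
    with Cons assms False show ?thesis by (simp add: successively_Cons)
  qed (use Cons assms in \<open>auto simp: successively_Cons\<close>)
qed simp

lemma red_step_ginv:
  assumes "successively (\<lambda>a b. a \<noteq> ginv b) S"
  shows "red_step (red_step S g) (ginv g) = S"
proof (cases S)
  case (Cons c T)
  show ?thesis
  proof (cases "c = ginv g")
    case True
    with Cons assms show ?thesis by (cases T) (auto simp: successively_Cons)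
  qed (use Cons in simp)
qed simp

lemma red_free_eq:
  assumes "free_eq u v"
  shows "red u = red v"
proof -
  have cancel: "red (x @ [g, ginv g] @ y) = red (x @ y)" for x y :: "'a gen list" and g
  proof -
    have "successively (\<lambda>a b. a \<noteq> ginv b) (foldl red_step [] x)"
      by (induction x rule: rev_induct) (simp_all add: successively_red_step)
    then show ?thesis by (simp add: red_def red_step_ginv)
  qed
  have "free_step x y \<Longrightarrow> red x = red y" for x y :: "'a gen list"
    by (erule free_step.cases) (use cancel in simp)
  with assms show ?thesis
    unfolding free_eq_def by (induction rule: rtrancl_induct) auto
qed

definition has_neg_letter :: "'a \<Rightarrow> 'a gen list \<Rightarrow> bool" where
  "has_neg_letter h S \<longleftrightarrow> (\<exists>c\<in>set S. fst c \<noteq> h \<and> \<not> snd c)"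

definition letter_state :: "'a \<Rightarrow> 'a gen list \<Rightarrow> 'a list" where
  "letter_state h S = rev (map fst (filter (\<lambda>c. fst c \<noteq> h) S))"

text \<open>The invariant of the reduced prefixes at block boundaries, read in word order: the
  reduced word is empty or ends with \<open>h\<close>, and \<open>h\<^sup>-\<^sup>1\<close> is never immediately followed by a
  positive letter other than \<open>h\<close>.\<close>
definition no_unpad_before_letter :: "'a \<Rightarrow> 'a gen list \<Rightarrow> bool" where
  "no_unpad_before_letter h S \<longleftrightarrow>
     successively (\<lambda>a b. \<not> (snd a \<and> fst a \<noteq> h \<and> b = (h, False))) S"

definition padded_stack :: "'a \<Rightarrow> 'a gen list \<Rightarrow> bool" where
  "padded_stack h S \<longleftrightarrow> (S = [] \<or> hd S = (h, True)) \<and> no_unpad_before_letter h S"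

lemma filter_red_step_pad:
  "fst g = h \<Longrightarrow> filter (\<lambda>c. fst c \<noteq> h) (red_step S g) = filter (\<lambda>c. fst c \<noteq> h) S"
  by (cases S) (auto simp: ginv_def)

lemma filter_foldl_red_step_pad:
  "\<forall>g\<in>set u. fst g = h \<Longrightarrow>
     filter (\<lambda>c. fst c \<noteq> h) (foldl red_step S u) = filter (\<lambda>c. fst c \<noteq> h) S"
  by (induction u arbitrary: S) (simp_all add: filter_red_step_pad)

lemma has_neg_letter_red_step:
  "has_neg_letter h S \<Longrightarrow> \<not> (snd g \<and> fst g \<noteq> h) \<Longrightarrow> has_neg_letter h (red_step S g)"
  by (cases S) (auto simp: has_neg_letter_def ginv_def)

lemma has_neg_letter_foldl_red_step:
  "has_neg_letter h S \<Longrightarrow> \<forall>g\<in>set u. \<not> (snd g \<and> fst g \<noteq> h) \<Longrightarrow>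
     has_neg_letter h (foldl red_step S u)"
  by (induction u arbitrary: S) (simp_all add: has_neg_letter_red_step)

lemma no_unpad_before_letter_red_step:
  "no_unpad_before_letter h S \<Longrightarrow> \<not> (snd g \<and> fst g \<noteq> h) \<Longrightarrow>
     no_unpad_before_letter h (red_step S g)"
  by (cases S) (auto simp: no_unpad_before_letter_def successively_Cons)

lemma no_unpad_before_letter_foldl_red_step:
  "no_unpad_before_letter h S \<Longrightarrow> \<forall>g\<in>set u. \<not> (snd g \<and> fst g \<noteq> h) \<Longrightarrow>
     no_unpad_before_letter h (foldl red_step S u)"
  by (induction u arbitrary: S) (simp_all add: no_unpad_before_letter_red_step)

lemma padded_stack_block:
  assumes S: "padded_stack h S" and g: "fst g \<noteq> h"
  shows "padded_stack h (foldl red_step S (pad_letter h g m))"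
proof (cases "snd g")
  case True
  with S g have "red_step S g = g # S"
    by (cases S) (auto simp: padded_stack_def ginv_def)
  with S g True show ?thesis
    by (cases S) (auto simp: pad_letter_def padded_stack_def no_unpad_before_letter_def ginv_def)
next
  case False
  define S1 where "S1 = foldl red_step S (replicate m (h, False))"
  define S2 where "S2 = red_step S1 g"
  have "no_unpad_before_letter h S1"
    using S unfolding S1_def padded_stack_def by (auto intro: no_unpad_before_letter_foldl_red_step)
  then have ok2: "no_unpad_before_letter h S2"
    using False unfolding S2_def by (simp add: no_unpad_before_letter_red_step)
  have "S2 = [] \<or> hd S2 \<noteq> (h, False)"
  proof (cases S1)
    case (Cons c T)
    with \<open>no_unpad_before_letter h S1\<close> g False show ?thesis
      by (cases T) (auto simp: S2_def ginv_def no_unpad_before_letter_def)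
  qed (use g in \<open>auto simp: S2_def\<close>)
  then have "red_step S2 (h, True) = (h, True) # S2"
    by (cases S2) (auto simp: ginv_def)
  moreover have "foldl red_step S (pad_letter h g m) = red_step S2 (h, True)"
    using False by (simp add: pad_letter_def S1_def S2_def)
  ultimately show ?thesis
    using ok2 by (cases S2) (auto simp: padded_stack_def no_unpad_before_letter_def)
qed

lemma has_neg_letter_block:
  assumes "padded_stack h S" "fst g \<noteq> h" "has_neg_letter h S"
  shows "has_neg_letter h (foldl red_step S (pad_letter h g m))"
proof (cases "snd g")
  case True
  with assms(1,2) have "red_step S g = g # S"
    by (cases S) (auto simp: padded_stack_def ginv_def)
  with assms(3) have "has_neg_letter h (red_step S g)"
    by (simp add: has_neg_letter_def)
  with True show ?thesis
    by (simp add: pad_letter_def has_neg_letter_red_step)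
next
  case False
  with assms(2,3) show ?thesis
    by (intro has_neg_letter_foldl_red_step) (auto simp: pad_letter_def)
qed

lemma gen_act_block:
  assumes g: "fst g \<noteq> h" and S: "\<not> has_neg_letter h S"
    and S': "\<not> has_neg_letter h (foldl red_step S (pad_letter h g m))"
  shows "gen_act g (letter_state h S) = Some (letter_state h (foldl red_step S (pad_letter h g m)))"
proof -
  obtain y b where gyb: "g = (y, b)" by fastforce
  show ?thesis
  proof (cases b)
    case True
    with S g gyb have "red_step S g = g # S"
      by (cases S) (auto simp: has_neg_letter_def ginv_def)
    with True g gyb show ?thesis
      by (simp add: pad_letter_def letter_state_def filter_red_step_pad ginv_def)
  next
    case False
    define S1 where "S1 = foldl red_step S (replicate m (h, False))"
    have S1_filter: "filter (\<lambda>c. fst c \<noteq> h) S1 = filter (\<lambda>c. fst c \<noteq> h) S"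
      unfolding S1_def by (simp add: filter_foldl_red_step_pad)
    have block: "foldl red_step S (pad_letter h g m) = red_step (red_step S1 g) (h, True)"
      using False gyb by (simp add: pad_letter_def S1_def)
    show ?thesis
    proof (cases "S1 \<noteq> [] \<and> hd S1 = (y, True)")
      case True
      then obtain T where T: "S1 = (y, True) # T" by (cases S1) auto
      with S1_filter g gyb have "filter (\<lambda>c. fst c \<noteq> h) S = (y, True) # filter (\<lambda>c. fst c \<noteq> h) T"
        by simp
      with T block gyb False show ?thesis
        by (simp add: letter_state_def filter_red_step_pad ginv_def)
    next
      case no_cancel: False
      have "red_step S1 g = g # S1"
        using no_cancel gyb False by (cases S1) (auto simp: ginv_def)
      then have "has_neg_letter h (red_step S1 g)"
        using g gyb False by (simp add: has_neg_letter_def)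
      with S' block have False
        by (simp add: has_neg_letter_red_step)
      then show ?thesis ..
    qed
  qed
qed

lemma padded_red_simulates:
  assumes "padded_stack h S" "\<forall>g\<in>set w. fst g \<noteq> h" "length ms = length w"
    "\<not> has_neg_letter h (foldl red_step S (padded h w ms))"
  shows "\<not> has_neg_letter h S \<and>
    word_act w (letter_state h S) = Some (letter_state h (foldl red_step S (padded h w ms)))"
  using assms
proof (induction w arbitrary: ms S)
  case (Cons g w)
  then obtain m ms' where ms: "ms = m # ms'" "length ms' = length w"
    by (cases ms) auto
  define S1 where "S1 = foldl red_step S (pad_letter h g m)"
  have "padded_stack h S1"
    using Cons.prems(1,2) by (simp add: S1_def padded_stack_block)
  with Cons.IH[of S1 ms'] Cons.prems(2,4) ms
  have S1: "\<not> has_neg_letter h S1" and w: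
    "word_act w (letter_state h S1) = Some (letter_state h (foldl red_step S (padded h (g # w) ms)))"
    by (simp_all add: S1_def)
  then have "\<not> has_neg_letter h S"
    using Cons.prems(1,2) has_neg_letter_block[of h S g m] unfolding S1_def by auto
  with S1 w Cons.prems(2) show ?case
    by (simp add: S1_def gen_act_block)
qed simp

lemma rep_one_poly_of_free_padding:
  assumes "\<forall>g\<in>set w. fst g \<noteq> h" "permissible_padding h w p" "rep_one_free p"
  shows "word_act w [] = Some []"
proof -
  obtain ms k where ms: "length ms = length w"
    and p: "p = padded h w ms @ replicate k (h, False)"
    using assms(2) unfolding permissible_padding_iff by blast
  define F where "F = foldl red_step [] (padded h w ms)"
  have "red p = []"
    using assms(3) red_free_eq unfolding rep_one_free_def by (fastforce simp: red_def)
  then have "foldl red_step F (replicate k (h, False)) = []"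
    by (simp add: red_def F_def p)
  then have "filter (\<lambda>c. fst c \<noteq> h) F = []"
    using filter_foldl_red_step_pad[of "replicate k (h, False)" h F] by simp
  then have "\<not> has_neg_letter h F" "letter_state h F = []"
    by (auto simp: has_neg_letter_def letter_state_def filter_empty_conv)
  with padded_red_simulates[of h "[]" w ms] assms(1) ms show ?thesis
    by (simp add: F_def padded_stack_def no_unpad_before_letter_def letter_state_def)
qed

theorem proposition4p10:
  fixes X :: "'a set" and h :: 'a and w :: "'a gen list"
  assumes "finite X" and "h \<notin> X" and "\<forall>g \<in> set w. fst g \<in> X"
  shows "(rep_one_poly X w \<longleftrightarrow>
            (\<exists>p. permissible_padding h w p \<and> rep_one_poly (insert h X) p))
       \<and> (rep_one_poly X w \<longleftrightarrow>
            (\<exists>p. permissible_padding h w p \<and> rep_one_free p))"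
proof -
  have w: "\<forall>g\<in>set w. fst g \<noteq> h"
    using assms(2,3) by auto
  have free: "rep_one_free p" if "word_act p [] = Some []" for p :: "'a gen list"
    using word_act_free_eq[OF that] by (simp add: rep_one_free_def)
  show ?thesis
    unfolding rep_one_poly_iff
    using padding_of_rep_one_poly[OF w] free rep_one_poly_of_free_padding[OF w] by blast
qed

end
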